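(* There is an absolute constant $K$ such that the following holds. Let $(h(i))_{i\ge 0}$ be a Fibonacci-automatic sequence generated by a Fibonacci-DFAO with $m$ states, and let $c \ge 0$ be an integer. Then there is a Fibonacci-DFAO with at most $K m^2 (c+1)^2$ states generating the shifted sequence $(h(i+c))_{i \ge 0}$.
   Context: Fibonacci numbers $F_0=0,F_1=1,F_k=F_{k-1}+F_{k-2}$; for a binary word $x=x_1\cdots x_\ell$, $[x]=\sum_j x_j F_{\ell-j+2}$; a valid Fibonacci representation is a binary word with no factor $11$ (leading zeros allowed). A Fibonacci-DFAO is a deterministic finite automaton with output $(Q,\{0,1\},\delta,q_0,\Delta,\tau)$ (with $\tau: Q\to\Delta$ the output map and $\delta$ possibly partial) reading valid Fibonacci representations most significant digit first; it has a self-loop on $q_0$ under $0$, so its output does not depend on leading zeros. It generates the sequence $(h(i))_{i\ge0}$ if $h(i) = \tau(\delta(q_0,x))$ for every valid representation $x$ with $[x]=i$. A sequence is Fibonacci-automatic if it is generated by some Fibonacci-DFAO. *)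

theory Defs
  imports "HOL-Number_Theory.Fib"
begin

text \<open>Binary words are bool lists (True = digit 1), read most significant digit first.
  fib_val x = sum_j x_j F_(l-j+2) with 1-based j; here j is 0-based.\<close>
definition fib_val :: "bool list \<Rightarrow> nat" where
  "fib_val x = (\<Sum>j<length x. if x ! j then fib (length x - j + 1) else 0)"

definition fib_valid :: "bool list \<Rightarrow> bool" where
  "fib_valid x \<longleftrightarrow> (\<forall>j. Suc j < length x \<longrightarrow> \<not> (x ! j \<and> x ! Suc j))"

fun run :: "('q \<Rightarrow> bool \<Rightarrow> 'q option) \<Rightarrow> 'q \<Rightarrow> bool list \<Rightarrow> 'q option" where
  "run \<delta> q [] = Some q"
| "run \<delta> q (a # w) = (case \<delta> q a of None \<Rightarrow> None | Some q' \<Rightarrow> run \<delta> q' w)"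

definition fib_dfao :: "'q set \<Rightarrow> ('q \<Rightarrow> bool \<Rightarrow> 'q option) \<Rightarrow> 'q \<Rightarrow> bool" where
  "fib_dfao Q \<delta> q0 \<longleftrightarrow> finite Q \<and> q0 \<in> Q
     \<and> (\<forall>q\<in>Q. \<forall>a q'. \<delta> q a = Some q' \<longrightarrow> q' \<in> Q)
     \<and> \<delta> q0 False = Some q0"

definition generates ::
  "('q \<Rightarrow> bool \<Rightarrow> 'q option) \<Rightarrow> 'q \<Rightarrow> ('q \<Rightarrow> 'o) \<Rightarrow> (nat \<Rightarrow> 'o) \<Rightarrow> bool" where
  "generates \<delta> q0 \<tau> h \<longleftrightarrow>
     (\<forall>x. fib_valid x \<longrightarrow> (\<exists>q. run \<delta> q0 x = Some q \<and> \<tau> q = h (fib_val x)))"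

end

theory Submission
  imports Defs
begin

(* The shifted sequence is generated by its residual automaton, whose states are the
  maps s \<mapsto> h (val (p s) + c), undefined on invalid words, one for each valid prefix p; so it
  suffices to count these residuals. Pad p with leading zeros and split it as p = a u with
  |u| = r, where c < F (r + 1) and 2^r = O((c + 1)^2). Adding c to the value of a u s changes
  only the tail u s, up to a carry that replaces a by its successor b (same length, value one
  larger), and since val (b 0^L) = val (a 0^L) + (number of valid tails of length L after a),
  whether the carry happens and what the new tail is depend only on u, s and the last digit of a.
  So the residual of p is determined by the states reached on a and on b, by u and by the last
  digit of a, which leaves at most 2 m^2 2^r = O(m^2 (c + 1)^2) residuals. *)

section \<open>Valid Fibonacci words\<close>

lemma fib_val_Nil [simp]: "fib_val [] = 0"
  by (simp add: fib_val_def)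

lemma fib_val_Cons [simp]:
  "fib_val (e # w) = (if e then fib (length w + 2) else 0) + fib_val w"
proof -
  have "fib_val (e # w)
      = (\<Sum>j<Suc (length w). if (e # w) ! j then fib (Suc (length w) - j + 1) else 0)"
    by (simp only: fib_val_def length_Cons)
  also have "\<dots> = (if e then fib (length w + 2) else 0) + fib_val w"
    by (subst sum.lessThan_Suc_shift) (auto simp: fib_val_def intro!: sum.cong)
  finally show ?thesis .
qed

lemma fib_valid_Nil [simp]: "fib_valid []"
  and fib_valid_singleton [simp]: "fib_valid [e]"
  by (auto simp: fib_valid_def)

lemma fib_valid_Cons_Cons [simp]:
  "fib_valid (x # y # w) \<longleftrightarrow> \<not> (x \<and> y) \<and> fib_valid (y # w)"
proof -
  have "fib_valid (x # y # w) \<longleftrightarrow> (\<forall>j<Suc (length w). \<not> ((x # y # w) ! j \<and> (y # w) ! j))"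
    by (simp add: fib_valid_def)
  also have "\<dots> \<longleftrightarrow> \<not> (x \<and> y) \<and> fib_valid (y # w)"
    by (simp only: All_less_Suc2) (simp add: fib_valid_def)
  finally show ?thesis .
qed

lemma fib_valid_ConsD: "fib_valid (e # w) \<Longrightarrow> fib_valid w"
  by (cases w) auto

lemma fib_valid_False_Cons [simp]: "fib_valid (False # w) \<longleftrightarrow> fib_valid w"
  by (cases w) auto

lemma fib_valid_append:
  "a \<noteq> [] \<Longrightarrow> fib_valid (a @ w) \<longleftrightarrow> fib_valid a \<and> fib_valid (last a # w)"
proof (induction a rule: induct_list012)
  case (3 x y a)
  then show ?case by auto
qed simp_all

lemma fib_valid_appendD:
  assumes "fib_valid (a @ w)"
  shows "fib_valid a" and "fib_valid w"
  using assms fib_valid_append[of a w] fib_valid_ConsD by (cases "a = []"; auto)+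

lemma fib_val_replicate_False_append [simp]: "fib_val (replicate k False @ w) = fib_val w"
  and fib_valid_replicate_False_append [simp]: "fib_valid (replicate k False @ w) \<longleftrightarrow> fib_valid w"
  by (induction k) auto

lemma fib_val_replicate_False [simp]: "fib_val (replicate k False) = 0"
  and fib_valid_replicate_False [simp]: "fib_valid (replicate k False)"
  using fib_val_replicate_False_append[of k "[]"] fib_valid_replicate_False_append[of k "[]"]
  by simp_all

lemma fib_val_append: "fib_val (a @ w) = fib_val (a @ replicate (length w) False) + fib_val w"
  by (induction a) auto

lemma fib_val_less: "fib_valid w \<Longrightarrow> fib_val w < fib (length w + 2)"
proof (induction w rule: induct_list012)
  case (2 x)
  then show ?case by (simp add: numeral_eq_Suc)
next
  case (3 x y w)
  have IH1: "fib_val w < fib (length w + 2)" and IH2: "fib_val (y # w) < fib (length w + 3)"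
    using 3 fib_valid_ConsD by (auto simp: numeral_eq_Suc)
  have "fib (length w + 4) = fib (length w + 3) + fib (length w + 2)"
    using fib_plus_2[of "length w + 2"] by (simp add: numeral_eq_Suc)
  with IH1 IH2 "3.prems" show ?case
    by (cases x) (auto simp: numeral_eq_Suc)
qed simp

(* The number of valid words of length L that may follow the digit e. *)
definition follow_count :: "bool \<Rightarrow> nat \<Rightarrow> nat" where
  "follow_count e L = (if e then fib (L + 1) else fib (L + 2))"

lemma follow_count_pos: "0 < follow_count e L"
  by (simp add: follow_count_def fib_neq_0_nat)

lemma follow_count_le: "follow_count e L \<le> fib (L + 2)"
  by (simp add: follow_count_def fib_mono)

lemma fib_valid_Cons_iff:
  "fib_valid (e # w) \<longleftrightarrow> fib_valid w \<and> fib_val w < follow_count e (length w)"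
proof (cases w)
  case (Cons y w')
  have "fib_valid (y # w') \<Longrightarrow> fib_val (y # w') < fib (length w' + 3)"
    using fib_val_less[of "y # w'"] by (simp add: numeral_eq_Suc)
  moreover have "fib_valid w' \<Longrightarrow> fib_val w' < fib (length w' + 2)"
    by (rule fib_val_less)
  ultimately show ?thesis
    using Cons fib_valid_ConsD by (cases y) (auto simp: follow_count_def numeral_eq_Suc)
qed (simp add: follow_count_def)

lemma fib_valid_append_zeros: "fib_valid a \<Longrightarrow> fib_valid (a @ replicate L False)"
  by (cases "a = []") (simp_all add: fib_valid_append fib_valid_Cons_iff follow_count_pos)

lemma lexordp_append_same_length:
  fixes a b :: "'a::linorder list"
  shows "ord_class.lexordp a b \<Longrightarrow> length a = length b \<Longrightarrow> ord_class.lexordp (a @ w) (b @ w')"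
  by (induction rule: lexordp_induct) auto

lemma fib_val_lexordp_less:
  "ord_class.lexordp a b \<Longrightarrow> length a = length b \<Longrightarrow> fib_valid a \<Longrightarrow> fib_valid b
   \<Longrightarrow> fib_val a < fib_val b"
proof (induction rule: lexordp_induct)
  case (Cons x xs y ys)
  have "fib_val xs < fib (length xs + 2)"
    using Cons.prems(2) by (intro fib_val_less) (rule fib_valid_ConsD)
  with Cons show ?case
    by simp
next
  case (Cons_eq x xs ys)
  then show ?case
    using fib_valid_ConsD by simp
qed simp

lemma fib_val_less_imp_lexordp:
  assumes "length a = length b" "fib_valid a" "fib_valid b" "fib_val a < fib_val b"
  shows "ord_class.lexordp a b"
proof (rule ccontr)
  assume "\<not> ord_class.lexordp a b"
  then have "a = b \<or> ord_class.lexordp b a"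
    using lexordp_linear by blast
  then show False
    using fib_val_lexordp_less[of b a] assms by auto
qed

lemma fib_val_inj:
  assumes "length a = length b" "fib_valid a" "fib_valid b" "fib_val a = fib_val b"
  shows "a = b"
proof (rule ccontr)
  assume "a \<noteq> b"
  then have "ord_class.lexordp a b \<or> ord_class.lexordp b a"
    using lexordp_linear by blast
  then show False
    using fib_val_lexordp_less[of a b] fib_val_lexordp_less[of b a] assms by auto
qed

lemma fib_val_append_less:
  assumes "length a = length b" "length w = length w'"
    and "fib_valid (a @ w)" "fib_valid (b @ w')" and "fib_val a < fib_val b"
  shows "fib_val (a @ w) < fib_val (b @ w')"
proof -
  have "ord_class.lexordp a b"
    using assms fib_valid_appendD(1) by (intro fib_val_less_imp_lexordp) auto
  then have "ord_class.lexordp (a @ w) (b @ w')"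
    using assms(1) by (rule lexordp_append_same_length)
  then show ?thesis
    using assms by (intro fib_val_lexordp_less) auto
qed

section \<open>Zeckendorf representations and carries\<close>

fun fib_rep :: "nat \<Rightarrow> nat \<Rightarrow> bool list" where
  "fib_rep 0 n = []"
| "fib_rep (Suc L) n =
     (if n < fib (L + 2) then False # fib_rep L n else True # fib_rep L (n - fib (L + 2)))"

lemma length_fib_rep [simp]: "length (fib_rep L n) = L"
  by (induction L arbitrary: n) auto

lemma fib_rep_correct: "n < fib (L + 2) \<Longrightarrow> fib_valid (fib_rep L n) \<and> fib_val (fib_rep L n) = n"
proof (induction L arbitrary: n)
  case (Suc L)
  show ?case
  proof (cases "n < fib (L + 2)")
    case True
    then show ?thesis
      using Suc.IH[of n] by (simp add: fib_valid_Cons_iff follow_count_def)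
  next
    case False
    have "fib (Suc L + 2) = fib (L + 2) + fib (L + 1)"
      using fib_plus_2[of "L + 1"] by simp
    then have "n - fib (L + 2) < fib (L + 1)"
      using Suc.prems False by linarith
    moreover have "fib (L + 1) \<le> fib (L + 2)"
      by (rule fib_mono) simp
    ultimately show ?thesis
      using False Suc.IH[of "n - fib (L + 2)"] by (simp add: fib_valid_Cons_iff follow_count_def)
  qed
qed simp

lemma fib_val_fib_rep: "n < fib (L + 2) \<Longrightarrow> fib_val (fib_rep L n) = n"
  using fib_rep_correct by blast

lemma fib_valid_Cons_fib_rep: "n < follow_count e L \<Longrightarrow> fib_valid (e # fib_rep L n)"
  using follow_count_le[of e L] by (simp add: fib_valid_Cons_iff fib_rep_correct)

lemma fib_val_append_zeros_add_follow_count_le: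
  assumes "fib_valid a" "fib_valid b" "length a = length b" "a \<noteq> []" "fib_val a < fib_val b"
  shows "fib_val (a @ replicate L False) + follow_count (last a) L \<le> fib_val (b @ replicate L False)"
proof -
  define k where "k = follow_count (last a) L"
  define w where "w = fib_rep L (k - 1)"
  have "0 < k" "k \<le> fib (L + 2)"
    using follow_count_pos follow_count_le k_def by auto
  then have "fib_valid (last a # w)" "fib_val w = k - 1"
    using fib_valid_Cons_fib_rep[of "k - 1" "last a" L] fib_val_fib_rep[of "k - 1" L]
    by (simp_all add: k_def w_def)
  then have "fib_val (a @ w) < fib_val (b @ replicate L False)"
    using assms by (intro fib_val_append_less) (simp_all add: w_def fib_valid_append fib_valid_append_zeros)
  moreover have "fib_val (a @ w) = fib_val (a @ replicate L False) + (k - 1)"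
    using fib_val_append[of a w] \<open>fib_val w = k - 1\<close> by (simp add: w_def)
  ultimately show ?thesis
    using \<open>0 < k\<close> k_def by simp
qed

lemma fib_val_append_zeros_le_of_succ:
  assumes "fib_valid a" "fib_valid b" "length a = length b" "a \<noteq> []" "fib_val b = fib_val a + 1"
  shows "fib_val (b @ replicate L False) \<le> fib_val (a @ replicate L False) + follow_count (last a) L"
proof (rule ccontr)
  define Z where "Z = replicate L False"
  define n where "n = fib_val (a @ Z) + follow_count (last a) L"
  assume "\<not> ?thesis"
  then have n_less: "n < fib_val (b @ Z)"
    by (simp add: n_def Z_def)
  have valid_aZ: "fib_valid (a @ Z)" and valid_bZ: "fib_valid (b @ Z)"
    using assms fib_valid_append_zeros Z_def by auto
  then have "n < fib (length a + L + 2)"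
    using n_less fib_val_less[of "b @ Z"] assms(3) by (simp add: Z_def)
  then obtain a' w where v: "fib_valid (a' @ w)" "fib_val (a' @ w) = n" "length a' = length a" "length w = L"
  proof -
    define v where "v = fib_rep (length a + L) n"
    have "fib_valid v" "fib_val v = n" "length v = length a + L"
      using fib_rep_correct \<open>n < fib (length a + L + 2)\<close> by (simp_all add: v_def)
    then show thesis
      using that[of "take (length a) v" "drop (length a) v"] by simp
  qed
  have "fib_valid a'"
    using v(1) fib_valid_appendD by blast
  consider "fib_val a' < fib_val a" | "a' = a" | "a' = b" | "fib_val b < fib_val a'"
    using fib_val_inj[of a' a] fib_val_inj[of a' b] \<open>fib_valid a'\<close> assms v(3) by linarith
  then show False
  proof cases
    case 1
    then show False
      using fib_val_append_less[of a' a w Z] v valid_aZ n_def by (simp add: Z_def)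
  next
    case 2
    then have "fib_val w < follow_count (last a) L"
      using v assms(4) by (simp add: fib_valid_append fib_valid_Cons_iff)
    then show False
      using fib_val_append[of a w] v 2 n_def by (simp add: Z_def)
  next
    case 3
    then show False
      using fib_val_append[of b w] v n_less by (simp add: Z_def)
  next
    case 4
    then show False
      using fib_val_append_less[of b a' Z w] v valid_bZ n_less assms(3) by (simp add: Z_def)
  qed
qed

lemma fib_val_append_zeros_succ:
  assumes "fib_valid a" "fib_valid b" "length a = length b" "fib_val b = fib_val a + 1"
  shows "fib_val (b @ replicate L False) = fib_val (a @ replicate L False) + follow_count (last a) L"
proof -
  have "a \<noteq> []"
    using assms by auto
  with assms show ?thesis
    using fib_val_append_zeros_add_follow_count_le[of a b L] fib_val_append_zeros_le_of_succ[of a b L]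
    by simp
qed

lemma ex_fib_succ_False_Cons:
  assumes "fib_valid a"
  shows "\<exists>b. fib_valid b \<and> length b = length (False # a) \<and> fib_val b = fib_val (False # a) + 1"
proof -
  have "fib_val a < fib (length a + 2)"
    using assms by (rule fib_val_less)
  moreover have "fib (length a + 3) = fib (length a + 2) + fib (length a + 1)"
    using fib_plus_2[of "length a + 1"] by (simp add: numeral_eq_Suc)
  moreover have "0 < fib (length a + 1)"
    by (simp add: fib_neq_0_nat)
  ultimately have "fib_val a + 1 < fib (length (False # a) + 2)"
    by (simp add: numeral_eq_Suc)
  then show ?thesis
    using fib_rep_correct by (intro exI[of _ "fib_rep (length (False # a)) (fib_val a + 1)"])
      (simp del: fib_rep.simps)
qed

section \<open>Residual automata\<close>

lemma run_append:
  "run \<delta> q (a @ b) = (case run \<delta> q a of None \<Rightarrow> None | Some q' \<Rightarrow> run \<delta> q' b)"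
  by (induction a arbitrary: q) (auto split: option.splits)

lemma run_closed:
  assumes "\<forall>q\<in>Q. \<forall>e q'. \<delta> q e = Some q' \<longrightarrow> q' \<in> Q" "q \<in> Q" "run \<delta> q x = Some q'"
  shows "q' \<in> Q"
  using assms(2,3) by (induction x arbitrary: q) (use assms(1) in \<open>auto split: option.splits\<close>)

lemma generates_run_append:
  assumes "generates \<delta> q0 \<tau> h" "fib_valid (a @ w)" "run \<delta> q0 a = Some q"
  shows "\<tau> (the (run \<delta> q w)) = h (fib_val (a @ w))"
  using assms by (auto simp: generates_def run_append)

definition residual :: "(nat \<Rightarrow> 'o) \<Rightarrow> bool list \<Rightarrow> bool list \<Rightarrow> 'o option" where
  "residual g p s = (if fib_valid (p @ s) then Some (g (fib_val (p @ s))) else None)"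

definition residual_step ::
  "(bool list \<Rightarrow> 'o option) \<Rightarrow> bool \<Rightarrow> (bool list \<Rightarrow> 'o option) option" where
  "residual_step R e = (if R [e] = None then None else Some (\<lambda>s. R (e # s)))"

lemma residual_replicate_False_append: "residual g (replicate k False @ p) = residual g p"
  by (rule ext) (simp add: residual_def)

lemma residual_step_residual:
  "residual_step (residual g p) e = (if fib_valid (p @ [e]) then Some (residual g (p @ [e])) else None)"
  by (auto simp: residual_step_def residual_def)

lemma run_residual_step:
  "fib_valid (p @ x) \<Longrightarrow> run residual_step (residual g p) x = Some (residual g (p @ x))"
proof (induction x arbitrary: p)
  case (Cons e x)
  have "fib_valid (p @ [e])"
    using Cons.prems fib_valid_appendD(1)[of "p @ [e]" x] by simp
  then show ?case
    using Cons by (simp add: residual_step_residual)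
qed simp

lemma residual_automaton:
  assumes "finite (residual g ` {p. fib_valid p})"
  shows "fib_dfao (residual g ` {p. fib_valid p}) residual_step (residual g [])"
    and "generates residual_step (residual g []) (\<lambda>R. the (R [])) g"
proof -
  have "residual_step (residual g []) False = Some (residual g [])"
    using residual_replicate_False_append[of g 1 "[]"] by (simp add: residual_step_residual)
  then show "fib_dfao (residual g ` {p. fib_valid p}) residual_step (residual g [])"
    using assms by (auto simp: fib_dfao_def residual_step_residual split: if_splits)
  show "generates residual_step (residual g []) (\<lambda>R. the (R [])) g"
    unfolding generates_def
  proof (intro allI impI)
    fix x
    assume "fib_valid x"
    then show "\<exists>R. run residual_step (residual g []) x = Some R \<and> the (R []) = g (fib_val x)"
      using run_residual_step[of "[]" x g] by (simp add: residual_def)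
  qed
qed

lemma fib_dfao_relabel_nat:
  fixes Q :: "'q set" and \<tau> :: "'q \<Rightarrow> 'o"
  assumes dfao: "fib_dfao Q \<delta> q0" and gen: "generates \<delta> q0 \<tau> h"
  shows "\<exists>(Q' :: nat set) \<delta>' q0' (\<tau>' :: nat \<Rightarrow> 'o).
    fib_dfao Q' \<delta>' q0' \<and> card Q' = card Q \<and> generates \<delta>' q0' \<tau>' h"
proof -
  have fin: "finite Q" and q0: "q0 \<in> Q" and loop: "\<delta> q0 False = Some q0"
    and closed: "\<forall>q\<in>Q. \<forall>e q'. \<delta> q e = Some q' \<longrightarrow> q' \<in> Q"
    using dfao by (simp_all add: fib_dfao_def)
  obtain f :: "'q \<Rightarrow> nat" where inj: "inj_on f Q"
    using finite_imp_inj_to_nat_seg[OF fin] by blast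
  define g where "g = inv_into Q f"
  have g_f: "g (f q) = q" if "q \<in> Q" for q
    using inj that by (simp add: g_def)
  define \<delta>' where "\<delta>' i e = map_option f (\<delta> (g i) e)" for i e
  have run: "run \<delta>' (f q) x = map_option f (run \<delta> q x)" if "q \<in> Q" for q x
    using that
  proof (induction x arbitrary: q)
    case (Cons e x)
    then show ?case
      using closed by (cases "\<delta> q e") (auto simp: \<delta>'_def g_f)
  qed simp
  have "fib_dfao (f ` Q) \<delta>' (f q0)"
    using fin q0 loop closed by (auto simp: fib_dfao_def \<delta>'_def g_f)
  moreover have "generates \<delta>' (f q0) (\<tau> \<circ> g) h"
    unfolding generates_def
  proof (intro allI impI)
    fix x
    assume "fib_valid x"
    then obtain q where "run \<delta> q0 x = Some q" "\<tau> q = h (fib_val x)"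
      using gen by (auto simp: generates_def)
    moreover have "q \<in> Q"
      using run_closed[OF closed q0] calculation(1) .
    ultimately show "\<exists>q'. run \<delta>' (f q0) x = Some q' \<and> (\<tau> \<circ> g) q' = h (fib_val x)"
      using run[OF q0, of x] g_f by simp
  qed
  moreover have "card (f ` Q) = card Q"
    using inj by (rule card_image)
  ultimately show ?thesis
    by blast
qed

section \<open>Residuals of a shifted sequence\<close>

(* A tuple (qa, qb, u, e) describes a prefix a u: qa and qb are the states reached on a and on its
  successor b, and e is the last digit of a. Since k valid tails of length L follow a, the shifted
  value either keeps the prefix a (N < k) or carries into b with the new tail N - k. *)
definition carry_residual ::
  "('q \<Rightarrow> bool \<Rightarrow> 'q option) \<Rightarrow> ('q \<Rightarrow> 'o) \<Rightarrow> nat \<Rightarrow> 'q \<times> 'q \<times> bool list \<times> bool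
    \<Rightarrow> bool list \<Rightarrow> 'o option" where
  "carry_residual \<delta> \<tau> c = (\<lambda>(qa, qb, u, e) s.
     if fib_valid (e # u @ s) then
       let L = length (u @ s); N = fib_val (u @ s) + c; k = follow_count e L in
       Some (\<tau> (the (if N < k then run \<delta> qa (fib_rep L N) else run \<delta> qb (fib_rep L (N - k)))))
     else None)"

lemma generates_append_fib_rep:
  assumes "generates \<delta> q0 \<tau> h" "fib_valid a" "a \<noteq> []" "run \<delta> q0 a = Some q"
    and "n < follow_count (last a) L"
  shows "\<tau> (the (run \<delta> q (fib_rep L n))) = h (fib_val (a @ replicate L False) + n)"
proof -
  have "fib_valid (last a # fib_rep L n)" "fib_val (fib_rep L n) = n"
    using assms(5) follow_count_le[of "last a" L] fib_valid_Cons_fib_rep fib_val_fib_rep by simp_all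
  then show ?thesis
    using generates_run_append[OF assms(1) _ assms(4)] fib_val_append[of a "fib_rep L n"] assms(2,3)
    by (simp add: fib_valid_append)
qed

lemma residual_shift_eq_carry_residual:
  assumes gen: "generates \<delta> q0 \<tau> h"
    and a: "fib_valid a" "run \<delta> q0 a = Some qa"
    and b: "fib_valid b" "run \<delta> q0 b = Some qb" "length b = length a" "fib_val b = fib_val a + 1"
    and c: "c < fib (length u + 1)"
  shows "residual (\<lambda>i. h (i + c)) (a @ u) = carry_residual \<delta> \<tau> c (qa, qb, u, last a)"
proof
  fix s
  define L where "L = length (u @ s)"
  define N where "N = fib_val (u @ s) + c"
  define k where "k = follow_count (last a) L"
  have "a \<noteq> []" "b \<noteq> []"
    using b(3,4) by auto
  then have valid_iff: "fib_valid (a @ u @ s) \<longleftrightarrow> fib_valid (last a # u @ s)"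
    using a(1) fib_valid_append by simp
  show "residual (\<lambda>i. h (i + c)) (a @ u) s = carry_residual \<delta> \<tau> c (qa, qb, u, last a) s"
  proof (cases "fib_valid (last a # u @ s)")
    case False
    then show ?thesis
      using valid_iff by (simp add: residual_def carry_residual_def)
  next
    case True
    have "fib_val (a @ u @ s) + c = fib_val (a @ replicate L False) + N"
      using fib_val_append[of a "u @ s"] by (simp add: N_def L_def)
    then have lhs: "residual (\<lambda>i. h (i + c)) (a @ u) s = Some (h (fib_val (a @ replicate L False) + N))"
      using True valid_iff by (simp add: residual_def)
    have rhs: "carry_residual \<delta> \<tau> c (qa, qb, u, last a) s
        = Some (\<tau> (the (if N < k then run \<delta> qa (fib_rep L N) else run \<delta> qb (fib_rep L (N - k)))))"
      using True by (simp add: carry_residual_def L_def N_def k_def Let_def)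
    show ?thesis
    proof (cases "N < k")
      case True
      then show ?thesis
        using lhs rhs generates_append_fib_rep[OF gen a(1) \<open>a \<noteq> []\<close> a(2)] by (simp add: k_def)
    next
      case False
      have "fib_val (u @ s) < k"
        using \<open>fib_valid (last a # u @ s)\<close> by (simp add: fib_valid_Cons_iff k_def L_def)
      moreover have "fib (length u + 1) \<le> fib (L + 1)"
        by (rule fib_mono) (simp add: L_def)
      ultimately have "N - k < follow_count (last b) L"
        using c fib_mono[of "L + 1" "L + 2"] by (auto simp: N_def follow_count_def)
      moreover have "fib_val (b @ replicate L False) = fib_val (a @ replicate L False) + k"
        using fib_val_append_zeros_succ[OF a(1) b(1) b(3)[symmetric] b(4)] by (simp add: k_def)
      ultimately show ?thesis
        using lhs rhs False generates_append_fib_rep[OF gen b(1) \<open>b \<noteq> []\<close> b(2)] by simp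
    qed
  qed
qed

lemma shift_residuals_subset:
  assumes dfao: "fib_dfao Q \<delta> q0" and gen: "generates \<delta> q0 \<tau> h" and c: "c < fib (r + 1)"
  shows "residual (\<lambda>i. h (i + c)) ` {p. fib_valid p}
    \<subseteq> carry_residual \<delta> \<tau> c ` (Q \<times> Q \<times> {u. length u = r} \<times> UNIV)"
proof
  fix R
  assume "R \<in> residual (\<lambda>i. h (i + c)) ` {p. fib_valid p}"
  then obtain p where p: "fib_valid p" "R = residual (\<lambda>i. h (i + c)) p"
    by blast
  define a where "a = False # take (length p) (replicate r False @ p)"
  define u where "u = drop (length p) (replicate r False @ p)"
  have pad: "replicate (Suc r) False @ p = a @ u"
    unfolding a_def u_def by (simp only: replicate_Suc append_Cons append_take_drop_id)
  have u: "length u = r"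
    by (simp add: u_def)
  have R: "R = residual (\<lambda>i. h (i + c)) (a @ u)"
    using residual_replicate_False_append[of "\<lambda>i. h (i + c)" "Suc r" p] p(2) unfolding pad by simp
  have "fib_valid (a @ u)"
    using fib_valid_replicate_False_append[of "Suc r" p] p(1) unfolding pad by simp
  then have valid_a: "fib_valid a"
    by (rule fib_valid_appendD)
  then obtain b where b: "fib_valid b" "length b = length a" "fib_val b = fib_val a + 1"
    using ex_fib_succ_False_Cons[of "tl a"] by (auto simp: a_def)
  have closed: "\<forall>q\<in>Q. \<forall>e q'. \<delta> q e = Some q' \<longrightarrow> q' \<in> Q" and q0: "q0 \<in> Q"
    using dfao by (simp_all add: fib_dfao_def)
  obtain qa qb where runs: "run \<delta> q0 a = Some qa" "run \<delta> q0 b = Some qb"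
    using gen valid_a b(1) unfolding generates_def by blast
  then have "qa \<in> Q" "qb \<in> Q"
    using run_closed[OF closed q0] by blast+
  moreover have "R = carry_residual \<delta> \<tau> c (qa, qb, u, last a)"
    using residual_shift_eq_carry_residual[OF gen valid_a runs(1) b(1) runs(2) b(2,3)] R u c by simp
  ultimately show "R \<in> carry_residual \<delta> \<tau> c ` (Q \<times> Q \<times> {u. length u = r} \<times> UNIV)"
    using u by blast
qed

lemma card_shift_residuals_le_pow2:
  assumes "fib_dfao Q \<delta> q0" "generates \<delta> q0 \<tau> h" "c < fib (r + 1)"
  shows "finite (residual (\<lambda>i. h (i + c)) ` {p. fib_valid p})"
    and "card (residual (\<lambda>i. h (i + c)) ` {p. fib_valid p}) \<le> 2 * card Q ^ 2 * 2 ^ r"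
proof -
  let ?S = "Q \<times> Q \<times> {u :: bool list. length u = r} \<times> (UNIV :: bool set)"
  have "finite {u :: bool list. length u = r}" and "card {u :: bool list. length u = r} = 2 ^ r"
    using finite_lists_length_eq[of "UNIV :: bool set" r] card_lists_length_eq[of "UNIV :: bool set" r]
    by simp_all
  moreover have "finite Q"
    using assms(1) by (simp add: fib_dfao_def)
  ultimately have "finite ?S" and "card ?S = 2 * card Q ^ 2 * 2 ^ r"
    by (simp_all add: card_cartesian_product power2_eq_square)
  note subset = shift_residuals_subset[OF assms]
  show "finite (residual (\<lambda>i. h (i + c)) ` {p. fib_valid p})"
    using finite_subset[OF subset finite_imageI[OF \<open>finite ?S\<close>]] .
  show "card (residual (\<lambda>i. h (i + c)) ` {p. fib_valid p}) \<le> 2 * card Q ^ 2 * 2 ^ r"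
    using card_mono[OF finite_imageI[OF \<open>finite ?S\<close>] subset] card_image_le[OF \<open>finite ?S\<close>, of "carry_residual \<delta> \<tau> c"]
      \<open>card ?S = 2 * card Q ^ 2 * 2 ^ r\<close> by linarith
qed

lemma pow2_le_fib: "2 ^ n \<le> fib (2 * n + 1)"
proof (induction n)
  case (Suc n)
  have "fib (2 * Suc n + 1) = fib (2 * n + 2) + fib (2 * n + 1)"
    using fib_plus_2[of "2 * n + 1"] by simp
  moreover have "fib (2 * n + 1) \<le> fib (2 * n + 2)"
    by (rule fib_mono) simp
  ultimately show ?case
    using Suc.IH by simp
qed simp

lemma ex_fib_index_bound: "\<exists>r. c < fib (r + 1) \<and> 2 ^ r \<le> 4 * (c + 1) ^ 2"
proof -
  obtain n where n: "2 ^ n \<le> c + 1" "c + 1 < 2 ^ (n + 1)"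
    using ex_power_ivl1[of 2 "c + 1"] by auto
  have "c < fib (2 * (n + 1) + 1)"
    using n(2) pow2_le_fib[of "n + 1"] by linarith
  moreover have "(2::nat) ^ (2 * (n + 1)) \<le> 4 * (c + 1) ^ 2"
  proof -
    have "(2::nat) ^ (2 * (n + 1)) = (2 * 2 ^ n) ^ 2"
      by (simp only: mult.commute[of 2] power_mult power_Suc Suc_eq_plus1[symmetric])
    also have "\<dots> \<le> (2 * (c + 1)) ^ 2"
      using n(1) by (intro power_mono) simp_all
    also have "\<dots> = 4 * (c + 1) ^ 2"
      unfolding power_mult_distrib by simp
    finally show ?thesis .
  qed
  ultimately show ?thesis
    by blast
qed

lemma card_shift_residuals_le:
  assumes "fib_dfao Q \<delta> q0" "generates \<delta> q0 \<tau> h"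
  shows "finite (residual (\<lambda>i. h (i + c)) ` {p. fib_valid p})"
    and "card (residual (\<lambda>i. h (i + c)) ` {p. fib_valid p}) \<le> 8 * card Q ^ 2 * (c + 1) ^ 2"
proof -
  obtain r where r: "c < fib (r + 1)" "2 ^ r \<le> 4 * (c + 1) ^ 2"
    using ex_fib_index_bound by blast
  then show "finite (residual (\<lambda>i. h (i + c)) ` {p. fib_valid p})"
    using card_shift_residuals_le_pow2(1)[OF assms] by blast
  have "card (residual (\<lambda>i. h (i + c)) ` {p. fib_valid p}) \<le> 2 * card Q ^ 2 * 2 ^ r"
    using card_shift_residuals_le_pow2(2)[OF assms r(1)] .
  also have "\<dots> \<le> 2 * card Q ^ 2 * (4 * (c + 1) ^ 2)"
    using r(2) by (rule mult_le_mono2)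
  finally show "card (residual (\<lambda>i. h (i + c)) ` {p. fib_valid p}) \<le> 8 * card Q ^ 2 * (c + 1) ^ 2"
    by simp
qed

theorem theorem13:
  shows "\<exists>K::nat. \<forall>(Q::nat set) \<delta> q0 (\<tau>::nat \<Rightarrow> 'o) h m (c::nat).
     fib_dfao Q \<delta> q0 \<and> card Q = m \<and> generates \<delta> q0 \<tau> h \<longrightarrow>
     (\<exists>(Q'::nat set) \<delta>' q0' (\<tau>'::nat \<Rightarrow> 'o).
        fib_dfao Q' \<delta>' q0' \<and> card Q' \<le> K * m^2 * (c+1)^2 \<and>
        generates \<delta>' q0' \<tau>' (\<lambda>i. h (i + c)))"
proof (intro exI[of _ 8] allI impI)
  fix Q :: "nat set" and \<delta> q0 and \<tau> :: "nat \<Rightarrow> 'o" and h m c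
  assume "fib_dfao Q \<delta> q0 \<and> card Q = m \<and> generates \<delta> q0 \<tau> h"
  then have dfao: "fib_dfao Q \<delta> q0" and m: "card Q = m" and gen: "generates \<delta> q0 \<tau> h"
    by simp_all
  obtain Q' :: "nat set" and \<delta>' q0' and \<tau>' :: "nat \<Rightarrow> 'o"
    where "fib_dfao Q' \<delta>' q0'" "generates \<delta>' q0' \<tau>' (\<lambda>i. h (i + c))"
      and "card Q' = card (residual (\<lambda>i. h (i + c)) ` {p. fib_valid p})"
    using fib_dfao_relabel_nat[OF residual_automaton[OF card_shift_residuals_le(1)[OF dfao gen]]]
    by blast
  with card_shift_residuals_le(2)[OF dfao gen] m
  show "\<exists>(Q'::nat set) \<delta>' q0' (\<tau>'::nat \<Rightarrow> 'o).
      fib_dfao Q' \<delta>' q0' \<and> card Q' \<le> 8 * m^2 * (c+1)^2 \<and> generates \<delta>' q0' \<tau>' (\<lambda>i. h (i + c))"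
    by (intro exI[of _ Q'] exI[of _ \<delta>'] exI[of _ q0'] exI[of _ \<tau>']) simp
qed

end
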